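(* Let $X$ be a topological space, $x\in X$, and $\mathcal B\subseteq\wp(X)$. Then the games $G_1(\Omega_{X,x},\mathcal B)$ and $G_1(\mathscr N(x),\neg\mathcal B)$ are dual.
   Context: $\Omega_{X,x}=\{A\subseteq X:x\in\mathrm{cl}_X(A)\}$; $\mathscr N(x)$ is the set of open sets containing $x$. In $G_1(\mathcal E,\mathcal C)$, at each inning $n\in\omega$ One plays $E_n\in\mathcal E$ and Two picks $x_n\in E_n$; Two wins iff $\{x_n:n\in\omega\}\in\mathcal C$; $\neg\mathcal C$ is the complement of $\mathcal C$. A strategy for One maps finite sequences of Two's moves to moves; it is predetermined if it depends only on the inning number. A strategy for Two maps finite sequences $(E_0,\dots,E_n)$ of One's moves to an element of $E_n$; it is Markov if it depends only on $E_n$ and $n$. Games $G,H$ are dual if: One has a winning strategy in $G$ iff Two has one in $H$; One has a winning strategy in $H$ iff Two has one in $G$; One has a winning predetermined strategy in $G$ iff Two has a winning Markov strategy in $H$; and One has a winning predetermined strategy in $H$ iff Two has a winning Markov strategy in $G$. *)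

theory Defs
  imports "HOL-Analysis.Analysis"
begin

definition Omega_at :: "'a topology \<Rightarrow> 'a \<Rightarrow> 'a set set" where
  "Omega_at X x = {A. A \<subseteq> topspace X \<and> x \<in> X closure_of A}"

definition nbhds :: "'a topology \<Rightarrow> 'a \<Rightarrow> 'a set set" where
  "nbhds X x = {U. openin X U \<and> x \<in> U}"

definition one_strategy :: "'a set set \<Rightarrow> ('a list \<Rightarrow> 'a set) \<Rightarrow> bool" where
  "one_strategy E \<sigma> \<longleftrightarrow> (\<forall>s. \<sigma> s \<in> E)"

definition play_vs_one :: "('a list \<Rightarrow> 'a set) \<Rightarrow> (nat \<Rightarrow> 'a) \<Rightarrow> bool" where
  "play_vs_one \<sigma> f \<longleftrightarrow> (\<forall>n. f n \<in> \<sigma> (map f [0..<n]))"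

definition one_has_winning_strategy :: "'a set set \<Rightarrow> 'a set set \<Rightarrow> bool" where
  "one_has_winning_strategy E C \<longleftrightarrow>
     (\<exists>\<sigma>. one_strategy E \<sigma> \<and> (\<forall>f. play_vs_one \<sigma> f \<longrightarrow> range f \<notin> C))"

definition one_has_winning_predetermined_strategy :: "'a set set \<Rightarrow> 'a set set \<Rightarrow> bool" where
  "one_has_winning_predetermined_strategy E C \<longleftrightarrow>
     (\<exists>\<sigma>::nat \<Rightarrow> 'a set. (\<forall>n. \<sigma> n \<in> E) \<and> (\<forall>f. (\<forall>n. f n \<in> \<sigma> n) \<longrightarrow> range f \<notin> C))"

definition two_strategy :: "'a set set \<Rightarrow> ('a set list \<Rightarrow> 'a) \<Rightarrow> bool" where
  "two_strategy E \<tau> \<longleftrightarrow> (\<forall>s. s \<noteq> [] \<and> set s \<subseteq> E \<longrightarrow> \<tau> s \<in> last s)"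

definition two_has_winning_strategy :: "'a set set \<Rightarrow> 'a set set \<Rightarrow> bool" where
  "two_has_winning_strategy E C \<longleftrightarrow>
     (\<exists>\<tau>. two_strategy E \<tau> \<and>
        (\<forall>Es. (\<forall>n. Es n \<in> E) \<longrightarrow> range (\<lambda>n. \<tau> (map Es [0..<Suc n])) \<in> C))"

definition two_has_winning_markov_strategy :: "'a set set \<Rightarrow> 'a set set \<Rightarrow> bool" where
  "two_has_winning_markov_strategy E C \<longleftrightarrow>
     (\<exists>m::'a set \<Rightarrow> nat \<Rightarrow> 'a. (\<forall>A\<in>E. \<forall>n. m A n \<in> A) \<and>
        (\<forall>Es. (\<forall>n. Es n \<in> E) \<longrightarrow> range (\<lambda>n. m (Es n) n) \<in> C))"

definition dual_games :: "'a set set \<Rightarrow> 'a set set \<Rightarrow> 'a set set \<Rightarrow> 'a set set \<Rightarrow> bool" where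
  "dual_games E1 C1 E2 C2 \<longleftrightarrow>
     (one_has_winning_strategy E1 C1 \<longleftrightarrow> two_has_winning_strategy E2 C2) \<and>
     (one_has_winning_strategy E2 C2 \<longleftrightarrow> two_has_winning_strategy E1 C1) \<and>
     (one_has_winning_predetermined_strategy E1 C1 \<longleftrightarrow> two_has_winning_markov_strategy E2 C2) \<and>
     (one_has_winning_predetermined_strategy E2 C2 \<longleftrightarrow> two_has_winning_markov_strategy E1 C1)"

end

theory Submission
  imports Defs
begin

(* A set has x in its closure iff it meets every open neighbourhood of x. Hence every member
   of Omega_{X,x} meets every member of N(x); the values of a selector on N(x) form a set in
   Omega_{X,x}; and the values of a selector g on Omega_{X,x} contain a neighbourhood of x,
   for otherwise the complement R of these values would lie in Omega_{X,x} and g R would be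
   both in R and outside it.
   Any two families related in this way give dual games. Against a strategy of One in one
   game, Two in the other game answers each move with a point lying also in One's current move
   of the first game. From a strategy tau of Two in one game, One in the other game keeps a
   simulated history of the first game: he plays the set of tau's answers to all possible next
   moves, and reads the point Two picks from it as a move to which tau answers with that point.
   Both plays then consist of the same points. *)

definition selections_contain :: "'a set set \<Rightarrow> 'a set set \<Rightarrow> bool" where
  "selections_contain F E \<longleftrightarrow> (\<forall>g. (\<forall>U\<in>F. g U \<in> U) \<longrightarrow> (\<exists>A\<in>E. A \<subseteq> g ` F))"

lemma selections_containD:
  "selections_contain F E \<Longrightarrow> (\<And>U. U \<in> F \<Longrightarrow> g U \<in> U) \<Longrightarrow> \<exists>A\<in>E. A \<subseteq> g ` F"
  unfolding selections_contain_def by blast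

lemma two_strategy_snoc_in:
  assumes "two_strategy F \<tau>" and "set Us \<subseteq> F" and "U \<in> F"
  shows "\<tau> (Us @ [U]) \<in> U"
proof -
  have "Us @ [U] \<noteq> [] \<and> set (Us @ [U]) \<subseteq> F"
    using assms(2,3) by simp
  then have "\<tau> (Us @ [U]) \<in> last (Us @ [U])"
    using assms(1) unfolding two_strategy_def by blast
  then show ?thesis by simp
qed

lemma two_strategy_move_in:
  assumes "two_strategy F \<tau>" and "\<forall>n. Us n \<in> F"
  shows "\<tau> (map Us [0..<Suc n]) \<in> Us n"
  using two_strategy_snoc_in[OF assms(1), of "map Us [0..<n]" "Us n"] assms(2) by auto

definition replies :: "('a list \<Rightarrow> 'a set) \<Rightarrow> 'a set list \<Rightarrow> 'a list" where
  "replies \<sigma> Us = foldl (\<lambda>ps U. ps @ [SOME p. p \<in> U \<inter> \<sigma> ps]) [] Us"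

lemma replies_snoc [simp]:
  "replies \<sigma> (Us @ [U]) = replies \<sigma> Us @ [SOME p. p \<in> U \<inter> \<sigma> (replies \<sigma> Us)]"
  by (simp add: replies_def)

lemma replies_upt:
  "replies \<sigma> (map Us [0..<n]) = map (\<lambda>k. last (replies \<sigma> (map Us [0..<Suc k]))) [0..<n]"
  by (induction n) (simp_all add: replies_def)

lemma two_has_winning_strategy_if_one_has:
  assumes "one_has_winning_strategy E C" and meet: "\<forall>A\<in>E. \<forall>U\<in>F. A \<inter> U \<noteq> {}"
    and "F \<subseteq> Pow S"
  shows "two_has_winning_strategy F (Pow S - C)"
proof -
  obtain \<sigma> where \<sigma>: "\<forall>ps. \<sigma> ps \<in> E" and wins: "\<forall>f. play_vs_one \<sigma> f \<longrightarrow> range f \<notin> C"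
    using assms(1) unfolding one_has_winning_strategy_def one_strategy_def by blast
  define \<tau> where "\<tau> Us = last (replies \<sigma> Us)" for Us
  have reply_in: "(SOME p. p \<in> U \<inter> \<sigma> ps) \<in> U \<inter> \<sigma> ps" if "U \<in> F" for U ps
    using meet \<sigma> that by (metis some_in_eq Int_commute)
  have \<tau>: "two_strategy F \<tau>"
    unfolding two_strategy_def
  proof (intro allI impI)
    fix Us :: "'a set list"
    assume "Us \<noteq> [] \<and> set Us \<subseteq> F"
    then obtain Vs U where "Us = Vs @ [U]" and "U \<in> F"
      by (metis rev_exhaust last_in_set last_snoc subsetD)
    then show "\<tau> Us \<in> last Us" using reply_in by (simp add: \<tau>_def)
  qed
  have "range (\<lambda>n. \<tau> (map Us [0..<Suc n])) \<in> Pow S - C" if Us: "\<forall>n. Us n \<in> F" for Us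
  proof -
    let ?f = "\<lambda>n. \<tau> (map Us [0..<Suc n])"
    have "play_vs_one \<sigma> ?f"
      unfolding play_vs_one_def
    proof
      fix n
      have "?f n \<in> \<sigma> (replies \<sigma> (map Us [0..<n]))"
        using reply_in Us by (simp add: \<tau>_def)
      then show "?f n \<in> \<sigma> (map ?f [0..<n])"
        using replies_upt[of \<sigma> Us n] by (simp add: \<tau>_def)
    qed
    moreover have "range ?f \<subseteq> S"
      using two_strategy_move_in[OF \<tau> Us] Us \<open>F \<subseteq> Pow S\<close> by blast
    ultimately show ?thesis using wins by blast
  qed
  with \<tau> show ?thesis unfolding two_has_winning_strategy_def by blast
qed

(* The move to which Two, following tau after the history Us, answers with p; an arbitrary
   member of F if there is none. *)
definition move_answered :: "('a set list \<Rightarrow> 'a) \<Rightarrow> 'a set set \<Rightarrow> 'a set list \<Rightarrow> 'a \<Rightarrow> 'a set" where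
  "move_answered \<tau> F Us p = (SOME U. U \<in> F \<and> (p \<in> (\<lambda>V. \<tau> (Us @ [V])) ` F \<longrightarrow> \<tau> (Us @ [U]) = p))"

lemma move_answered:
  assumes "F \<noteq> {}"
  shows "move_answered \<tau> F Us p \<in> F"
    and "p \<in> (\<lambda>V. \<tau> (Us @ [V])) ` F \<Longrightarrow> \<tau> (Us @ [move_answered \<tau> F Us p]) = p"
proof -
  have "\<exists>U. U \<in> F \<and> (p \<in> (\<lambda>V. \<tau> (Us @ [V])) ` F \<longrightarrow> \<tau> (Us @ [U]) = p)"
    using assms by blast
  then have "move_answered \<tau> F Us p \<in> F \<and>
      (p \<in> (\<lambda>V. \<tau> (Us @ [V])) ` F \<longrightarrow> \<tau> (Us @ [move_answered \<tau> F Us p]) = p)"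
    unfolding move_answered_def by (rule someI_ex)
  then show "move_answered \<tau> F Us p \<in> F"
    and "p \<in> (\<lambda>V. \<tau> (Us @ [V])) ` F \<Longrightarrow> \<tau> (Us @ [move_answered \<tau> F Us p]) = p"
    by blast+
qed

definition shadow :: "('a set list \<Rightarrow> 'a) \<Rightarrow> 'a set set \<Rightarrow> 'a list \<Rightarrow> 'a set list" where
  "shadow \<tau> F ps = foldl (\<lambda>Us p. Us @ [move_answered \<tau> F Us p]) [] ps"

lemma shadow_Nil [simp]: "shadow \<tau> F [] = []"
  by (simp add: shadow_def)

lemma shadow_snoc [simp]:
  "shadow \<tau> F (ps @ [p]) = shadow \<tau> F ps @ [move_answered \<tau> F (shadow \<tau> F ps) p]"
  by (simp add: shadow_def)

lemma set_shadow_subset: "F \<noteq> {} \<Longrightarrow> set (shadow \<tau> F ps) \<subseteq> F"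
  by (induction ps rule: rev_induct) (simp_all add: move_answered)

lemma one_has_winning_strategy_if_two_has:
  assumes "two_has_winning_strategy F D" and sel: "selections_contain F E"
    and "F \<noteq> {}" and "C \<inter> D = {}"
  shows "one_has_winning_strategy E C"
proof -
  obtain \<tau> where \<tau>: "two_strategy F \<tau>"
    and wins: "\<forall>Us. (\<forall>n. Us n \<in> F) \<longrightarrow> range (\<lambda>n. \<tau> (map Us [0..<Suc n])) \<in> D"
    using assms(1) unfolding two_has_winning_strategy_def by blast
  define \<sigma> where "\<sigma> ps = (SOME A. A \<in> E \<and> A \<subseteq> (\<lambda>U. \<tau> (shadow \<tau> F ps @ [U])) ` F)" for ps
  have \<sigma>: "\<sigma> ps \<in> E \<and> \<sigma> ps \<subseteq> (\<lambda>U. \<tau> (shadow \<tau> F ps @ [U])) ` F" for ps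
  proof -
    have "\<tau> (shadow \<tau> F ps @ [U]) \<in> U" if "U \<in> F" for U
      using two_strategy_snoc_in[OF \<tau> set_shadow_subset[OF \<open>F \<noteq> {}\<close>] that] .
    then have "\<exists>A\<in>E. A \<subseteq> (\<lambda>U. \<tau> (shadow \<tau> F ps @ [U])) ` F"
      by (rule selections_containD[OF sel])
    then have "\<exists>A. A \<in> E \<and> A \<subseteq> (\<lambda>U. \<tau> (shadow \<tau> F ps @ [U])) ` F"
      by blast
    then show ?thesis unfolding \<sigma>_def by (rule someI_ex)
  qed
  have "range f \<notin> C" if f: "play_vs_one \<sigma> f" for f
  proof -
    define Us where "Us n = last (shadow \<tau> F (map f [0..<Suc n]))" for n
    have "f n \<in> (\<lambda>U. \<tau> (shadow \<tau> F (map f [0..<n]) @ [U])) ` F" for n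
      using f \<sigma> unfolding play_vs_one_def by blast
    then have Us: "Us n \<in> F \<and> \<tau> (shadow \<tau> F (map f [0..<n]) @ [Us n]) = f n" for n
      using move_answered[OF \<open>F \<noteq> {}\<close>] by (simp add: Us_def)
    have "shadow \<tau> F (map f [0..<n]) = map Us [0..<n]" for n
      by (induction n) (simp_all add: Us_def)
    then have "(\<lambda>n. \<tau> (map Us [0..<Suc n])) = f"
      using Us by (simp add: fun_eq_iff)
    then have "range f \<in> D" using wins Us by metis
    then show ?thesis using \<open>C \<inter> D = {}\<close> by blast
  qed
  then show ?thesis unfolding one_has_winning_strategy_def one_strategy_def using \<sigma> by blast
qed

lemma two_has_winning_markov_strategy_if_one_has_predetermined:
  assumes "one_has_winning_predetermined_strategy E C" and meet: "\<forall>A\<in>E. \<forall>U\<in>F. A \<inter> U \<noteq> {}"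
    and "F \<subseteq> Pow S"
  shows "two_has_winning_markov_strategy F (Pow S - C)"
proof -
  obtain \<sigma> :: "nat \<Rightarrow> 'a set" where \<sigma>: "\<forall>n. \<sigma> n \<in> E"
    and wins: "\<And>f. \<forall>n. f n \<in> \<sigma> n \<Longrightarrow> range f \<notin> C"
    using assms(1) unfolding one_has_winning_predetermined_strategy_def by blast
  define m where "m U n = (SOME p. p \<in> U \<inter> \<sigma> n)" for U n
  have m: "m U n \<in> U \<inter> \<sigma> n" if "U \<in> F" for U n
    using meet \<sigma> that unfolding m_def by (metis some_in_eq Int_commute)
  have "range (\<lambda>n. m (Us n) n) \<in> Pow S - C" if Us: "\<forall>n. Us n \<in> F" for Us
  proof -
    have "range (\<lambda>n. m (Us n) n) \<notin> C"
      using m Us by (intro wins) blast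
    moreover have "range (\<lambda>n. m (Us n) n) \<subseteq> S"
      using m Us \<open>F \<subseteq> Pow S\<close> by blast
    ultimately show ?thesis by blast
  qed
  then show ?thesis unfolding two_has_winning_markov_strategy_def using m by blast
qed

lemma one_has_winning_predetermined_strategy_if_two_has_markov:
  assumes "two_has_winning_markov_strategy F D" and sel: "selections_contain F E"
    and "C \<inter> D = {}"
  shows "one_has_winning_predetermined_strategy E C"
proof -
  obtain m :: "'a set \<Rightarrow> nat \<Rightarrow> 'a" where m: "\<forall>U\<in>F. \<forall>n. m U n \<in> U"
    and wins: "\<And>Us. \<forall>n. Us n \<in> F \<Longrightarrow> range (\<lambda>n. m (Us n) n) \<in> D"
    using assms(1) unfolding two_has_winning_markov_strategy_def by blast
  have "\<exists>A\<in>E. A \<subseteq> (\<lambda>U. m U n) ` F" for n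
    using m by (intro selections_containD[OF sel]) blast
  then obtain \<sigma> where \<sigma>: "\<forall>n. \<sigma> n \<in> E \<and> \<sigma> n \<subseteq> (\<lambda>U. m U n) ` F"
    using choice[of "\<lambda>n A. A \<in> E \<and> A \<subseteq> (\<lambda>U. m U n) ` F"] by blast
  have "range f \<notin> C" if f: "\<forall>n. f n \<in> \<sigma> n" for f
  proof -
    have "\<forall>n. \<exists>U. U \<in> F \<and> m U n = f n"
      using f \<sigma> by (simp add: image_iff subset_iff) metis
    then obtain Us where Us: "\<forall>n. Us n \<in> F \<and> m (Us n) n = f n"
      by (rule choice[THEN exE]) blast
    then have "range f = range (\<lambda>n. m (Us n) n)"
      by simp
    also have "\<dots> \<in> D"
      using Us by (intro wins) blast
    finally show ?thesis using \<open>C \<inter> D = {}\<close> by blast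
  qed
  then show ?thesis unfolding one_has_winning_predetermined_strategy_def using \<sigma> by blast
qed

lemma nbhds_subset_Pow: "nbhds X x \<subseteq> Pow (topspace X)"
  unfolding nbhds_def by (auto dest: openin_subset)

lemma Omega_at_subset_Pow: "Omega_at X x \<subseteq> Pow (topspace X)"
  unfolding Omega_at_def by blast

lemma topspace_in_nbhds: "x \<in> topspace X \<Longrightarrow> topspace X \<in> nbhds X x"
  unfolding nbhds_def by simp

lemma topspace_in_Omega_at: "x \<in> topspace X \<Longrightarrow> topspace X \<in> Omega_at X x"
  unfolding Omega_at_def by (simp add: closure_of_topspace)

lemma Omega_at_meets_nbhds: "A \<in> Omega_at X x \<Longrightarrow> U \<in> nbhds X x \<Longrightarrow> A \<inter> U \<noteq> {}"
  unfolding Omega_at_def nbhds_def in_closure_of by blast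

lemma selections_contain_nbhds_Omega_at:
  assumes "x \<in> topspace X"
  shows "selections_contain (nbhds X x) (Omega_at X x)"
  unfolding selections_contain_def
proof (intro allI impI)
  fix g assume g: "\<forall>U\<in>nbhds X x. g U \<in> U"
  have "g ` nbhds X x \<subseteq> topspace X"
  proof (rule image_subsetI)
    fix U assume "U \<in> nbhds X x"
    then have "g U \<in> U" and "U \<subseteq> topspace X"
      using g nbhds_subset_Pow[of X x] by auto
    then show "g U \<in> topspace X" by blast
  qed
  moreover have "x \<in> X closure_of (g ` nbhds X x)"
    unfolding in_closure_of
  proof (intro conjI allI impI)
    fix T assume "x \<in> T \<and> openin X T"
    then have "T \<in> nbhds X x"
      by (simp add: nbhds_def)
    then show "\<exists>y. y \<in> g ` nbhds X x \<and> y \<in> T"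
      using g by blast
  qed (rule assms)
  ultimately show "\<exists>A\<in>Omega_at X x. A \<subseteq> g ` nbhds X x"
    unfolding Omega_at_def by blast
qed

lemma selections_contain_Omega_at_nbhds:
  assumes "x \<in> topspace X"
  shows "selections_contain (Omega_at X x) (nbhds X x)"
  unfolding selections_contain_def
proof (intro allI impI)
  fix g assume g: "\<forall>A\<in>Omega_at X x. g A \<in> A"
  let ?R = "topspace X - g ` Omega_at X x"
  have "?R \<notin> Omega_at X x"
  proof
    assume R: "?R \<in> Omega_at X x"
    with g have "g ?R \<in> ?R" by (rule bspec)
    moreover have "g ?R \<in> g ` Omega_at X x" using R by (rule imageI)
    ultimately show False by blast
  qed
  then have "x \<notin> X closure_of ?R"
    by (simp add: Omega_at_def)
  then obtain U where U: "openin X U" "x \<in> U" and "\<forall>y\<in>?R. y \<notin> U"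
    using assms unfolding in_closure_of by blast
  then have "U \<subseteq> g ` Omega_at X x"
    using openin_subset by blast
  with U show "\<exists>U\<in>nbhds X x. U \<subseteq> g ` Omega_at X x"
    unfolding nbhds_def by blast
qed

theorem mainTheorem4:
  fixes X :: "'a topology" and x :: 'a and B :: "'a set set"
  assumes "x \<in> topspace X" and "B \<subseteq> Pow (topspace X)"
  shows "dual_games (Omega_at X x) B (nbhds X x) (Pow (topspace X) - B)"
proof -
  let ?\<Omega> = "Omega_at X x" and ?N = "nbhds X x" and ?S = "topspace X"
  have meet: "\<forall>A\<in>?\<Omega>. \<forall>U\<in>?N. A \<inter> U \<noteq> {}" "\<forall>U\<in>?N. \<forall>A\<in>?\<Omega>. U \<inter> A \<noteq> {}"
    by (auto dest: Omega_at_meets_nbhds)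
  have sel: "selections_contain ?N ?\<Omega>" "selections_contain ?\<Omega> ?N"
    using assms(1) by (rule selections_contain_nbhds_Omega_at selections_contain_Omega_at_nbhds)+
  have nonempty: "?N \<noteq> {}" "?\<Omega> \<noteq> {}"
    using topspace_in_nbhds[OF assms(1)] topspace_in_Omega_at[OF assms(1)] by auto
  have disjoint: "B \<inter> (Pow ?S - B) = {}" "(Pow ?S - B) \<inter> B = {}"
    by auto
  have complement: "Pow ?S - (Pow ?S - B) = B"
    using assms(2) by auto
  note strategies =
    two_has_winning_strategy_if_one_has[OF _ meet(1) nbhds_subset_Pow]
    two_has_winning_strategy_if_one_has[OF _ meet(2) Omega_at_subset_Pow, of "Pow ?S - B",
      unfolded complement]
    one_has_winning_strategy_if_two_has[OF _ sel(1) nonempty(1) disjoint(1)]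
    one_has_winning_strategy_if_two_has[OF _ sel(2) nonempty(2) disjoint(2)]
    two_has_winning_markov_strategy_if_one_has_predetermined[OF _ meet(1) nbhds_subset_Pow]
    two_has_winning_markov_strategy_if_one_has_predetermined[OF _ meet(2) Omega_at_subset_Pow,
      of "Pow ?S - B", unfolded complement]
    one_has_winning_predetermined_strategy_if_two_has_markov[OF _ sel(1) disjoint(1)]
    one_has_winning_predetermined_strategy_if_two_has_markov[OF _ sel(2) disjoint(2)]
  show ?thesis
    unfolding dual_games_def by (intro conjI iffI) (erule strategies)+
qed

end
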